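(* Let $E_3^*$ be the greedy exponential-progression-free set defined in the context, and let $G_3^*$ be the set of positive integers $m$ such that $v_p(m)\in A_3^*$ for every prime $p\mid m$, where $A_3^*$ is the set of nonnegative integers with no digit $2$ in base $3$. Then an integer $k = p_1^{a_1}p_2^{a_2}\cdots p_n^{a_n}$ (with distinct primes $p_i$ and exponents $a_i\ge 1$) belongs to $E_3^*$ if and only if $\gcd(a_1,a_2,\dots,a_n)$ belongs to $G_3^*$.
   Context: An exponential progression is a triple $x, x^n, x^{n^2}$ with natural numbers $x, n > 1$. $E_3^*$ is constructed greedily: $1\in E_3^*$, and for $k=2,3,4,\dots$ in increasing order, $k$ is put into $E_3^*$ unless there are natural numbers $x,n>1$ with $x\in E_3^*$, $x^n\in E_3^*$ and $k = x^{n^2}$. (So $E_3^* = \{1,2,\dots,15,17,\dots,80,82,\dots\}$.) $G_3^*$ is (by Rankin) the greedy set of positive integers free of 3-term geometric progressions. *)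

theory Defs
  imports Main "HOL-Computational_Algebra.Primes"
begin

text \<open>Since x < x^n < x^(n^2) = k, the recursion is well founded.\<close>
function E3star :: "nat \<Rightarrow> bool" where
  "E3star k = (if k = 0 then False else if k = 1 then True else
     \<not> (\<exists>x\<in>{2..<k}. \<exists>n\<in>{2..<k}. k = x ^ (n\<^sup>2) \<and> E3star x \<and>
          (if x ^ n < k then E3star (x ^ n) else False)))"
  by auto
termination
  by (relation "measure id") auto

definition A3star :: "nat \<Rightarrow> bool" where
  "A3star a \<longleftrightarrow> (\<forall>i. (a div 3 ^ i) mod 3 \<noteq> 2)"

definition G3star :: "nat \<Rightarrow> bool" where
  "G3star m \<longleftrightarrow> m > 0 \<and> (\<forall>p. prime p \<and> p dvd m \<longrightarrow> A3star (multiplicity p m))"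

end

theory Submission
  imports Defs "HOL-Computational_Algebra.Nth_Powers"
begin

text \<open>If \<open>g\<close> is the gcd of the exponents of \<open>x\<close>, then \<open>x, x\<^sup>n, x\<^bsup>n\<^sup>2\<^esup>\<close> have exponent
  gcds \<open>g, g n, g n\<^sup>2\<close>, and conversely \<open>k\<close> is an \<open>n\<^sup>2\<close>-th power as soon as \<open>n\<^sup>2\<close> divides its
  exponent gcd. So the greedy recursion defining \<open>E\<^sub>3\<^sup>*\<close> at \<open>k\<close> is the greedy recursion for
  sets free of geometric progressions \<open>a, a n, a n\<^sup>2\<close>, read at the exponent gcd of \<open>k\<close>.
  The latter greedy set is \<open>G\<^sub>3\<^sup>*\<close>, prime by prime: ternary numbers without digit 2 contain
  no nontrivial 3-term arithmetic progression, and every other exponent \<open>c\<close> ends one,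
  \<open>l, h, c\<close>, whose first two terms have no digit 2.\<close>

declare E3star.simps [simp del]

lemma A3star_iff_mod_div: "A3star a \<longleftrightarrow> a mod 3 \<noteq> 2 \<and> A3star (a div 3)"
proof -
  have "(\<forall>i. a div 3 ^ i mod 3 \<noteq> 2) \<longleftrightarrow>
        a mod 3 \<noteq> 2 \<and> (\<forall>i. a div 3 ^ Suc i mod 3 \<noteq> 2)"
    by (metis not0_implies_Suc power_0 div_by_1)
  then show ?thesis
    unfolding A3star_def by (simp add: div_mult2_eq)
qed

lemma A3star_0 [simp]: "A3star 0"
  by (simp add: A3star_def)

lemma A3star_3_mult_add_iff: "r \<le> 1 \<Longrightarrow> A3star (3 * a + r) \<longleftrightarrow> A3star a"
  by (subst A3star_iff_mod_div) simp

lemma A3star_mod_3_le_1: "A3star a \<Longrightarrow> a mod 3 \<le> 1"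
  using A3star_iff_mod_div[of a] by linarith

text \<open>No carries occur when two numbers without digit 2 are added, so \<open>x + z = 2 y\<close>
  forces the digits of \<open>x\<close> and \<open>z\<close> to agree one by one.\<close>
lemma A3star_midpoint_eq:
  assumes "A3star x" "A3star y" "A3star z" "x + z = 2 * y"
  shows "x = z"
  using assms
proof (induction y arbitrary: x z rule: less_induct)
  case (less y)
  show ?case
  proof (cases "y = 0")
    case True
    then show ?thesis using less.prems by simp
  next
    case False
    have digits: "x mod 3 \<le> 1" "y mod 3 \<le> 1" "z mod 3 \<le> 1"
      using less.prems A3star_mod_3_le_1 by blast+
    have "(x mod 3 + z mod 3) mod 3 = (2 * (y mod 3)) mod 3"
      using less.prems(4) by (metis mod_add_eq mod_mult_right_eq)
    with digits have last_digit: "x mod 3 + z mod 3 = 2 * (y mod 3)"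
      by simp
    then have "x mod 3 = z mod 3"
      using digits by (cases "y mod 3 = 0") auto
    moreover have "x div 3 + z div 3 = 2 * (y div 3)"
      using less.prems(4) last_digit
        div_mult_mod_eq[of x 3] div_mult_mod_eq[of y 3] div_mult_mod_eq[of z 3] by linarith
    then have "x div 3 = z div 3"
      using less.IH[of "y div 3"] less.prems(1-3) False
      by (simp add: A3star_iff_mod_div[of x] A3star_iff_mod_div[of y] A3star_iff_mod_div[of z])
    ultimately show ?thesis
      by (metis div_mult_mod_eq)
  qed
qed

text \<open>Witnesses: replace every digit 2 of \<open>c\<close> by 0 for \<open>l\<close> and by 1 for \<open>h\<close>.\<close>
lemma ex_A3star_progression_through:
  "\<exists>l h. A3star l \<and> A3star h \<and> l \<le> h \<and> l + c = 2 * h"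
proof (induction c rule: less_induct)
  case (less c)
  show ?case
  proof (cases "c = 0")
    case True
    then show ?thesis by (intro exI[of _ 0]) simp
  next
    case False
    then obtain l h where lh: "A3star l" "A3star h" "l \<le> h" "l + c div 3 = 2 * h"
      using less.IH[of "c div 3"] by auto
    show ?thesis
    proof (cases "c mod 3 = 2")
      case True
      then have "3 * l + c = 2 * (3 * h + 1)"
        using lh(4) by presburger
      then show ?thesis
        using lh A3star_3_mult_add_iff[of 0 l] A3star_3_mult_add_iff[of 1 h]
        by (intro exI[of _ "3 * l"] exI[of _ "3 * h + 1"]) auto
    next
      case False
      then have "c mod 3 \<le> 1" by linarith
      moreover have "3 * l + c mod 3 + c = 2 * (3 * h + c mod 3)"
        using lh(4) by presburger
      ultimately show ?thesis
        using lh A3star_3_mult_add_iff[of "c mod 3" l] A3star_3_mult_add_iff[of "c mod 3" h]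
        by (intro exI[of _ "3 * l + c mod 3"] exI[of _ "3 * h + c mod 3"]) auto
    qed
  qed
qed

lemma G3star_iff_multiplicity:
  "m > 0 \<Longrightarrow> G3star m \<longleftrightarrow> (\<forall>p. prime p \<longrightarrow> A3star (multiplicity p m))"
  unfolding G3star_def by (metis A3star_0 not_dvd_imp_multiplicity_0)

lemma G3star_prod_prime_powers:
  assumes "finite S" "\<And>p. p \<in> S \<Longrightarrow> prime p" "\<And>p. p \<in> S \<Longrightarrow> A3star (e p)"
  shows "G3star (\<Prod>p\<in>S. p ^ e p)"
proof -
  have "(\<Prod>p\<in>S. p ^ e p) > 0"
    using assms(2) by (simp add: prime_gt_0_nat prod_pos)
  then show ?thesis
    using assms by (simp add: G3star_iff_multiplicity multiplicity_prod_prime_powers)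
qed

lemma G3star_no_geometric_progression:
  assumes "n \<ge> 2" "G3star a" "G3star (a * n)"
  shows "\<not> G3star (a * n\<^sup>2)"
proof
  assume G: "G3star (a * n\<^sup>2)"
  have "a > 0" "n > 0"
    using assms G3star_def by auto
  obtain p where p: "prime p" "p dvd n"
    using assms(1) prime_factor_nat[of n] by auto
  have "multiplicity p n > 0"
    using p \<open>n > 0\<close> by (simp add: prime_multiplicity_gt_zero_iff)
  moreover have A: "A3star (multiplicity p a + i * multiplicity p n)"
    if "G3star (a * n ^ i)" for i
    using that p(1) \<open>a > 0\<close> \<open>n > 0\<close>
    by (simp add: G3star_iff_multiplicity prime_elem_multiplicity_mult_distrib
        prime_elem_multiplicity_power_distrib)
  ultimately show False
    using A3star_midpoint_eq[OF A[of 0] A[of 1] A[of 2]] assms(2,3) G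
    by simp
qed

text \<open>\<open>a\<close> and \<open>a * n\<close> collect, prime by prime, the first two terms of the progressions
  given by \<open>ex_A3star_progression_through\<close> for the exponents of \<open>m\<close>.\<close>
lemma G3star_greedy:
  assumes "m > 0" "\<not> G3star m"
  obtains a n where "n \<ge> 2" "a * n\<^sup>2 = m" "G3star a" "G3star (a * n)"
proof -
  obtain lo hi :: "nat \<Rightarrow> nat"
    where lh: "\<And>c. A3star (lo c) \<and> A3star (hi c) \<and> lo c \<le> hi c \<and> lo c + c = 2 * hi c"
    using ex_A3star_progression_through by metis
  define S where "S = prime_factors m"
  define f where "f p = multiplicity p m" for p
  define a where "a = (\<Prod>p\<in>S. p ^ lo (f p))"
  define n where "n = (\<Prod>p\<in>S. p ^ (hi (f p) - lo (f p)))"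
  have S: "finite S" "\<And>p. p \<in> S \<Longrightarrow> prime p"
    unfolding S_def by auto
  have an: "a * n = (\<Prod>p\<in>S. p ^ hi (f p))"
    unfolding a_def n_def by (simp add: prod.distrib[symmetric] power_add[symmetric] lh)
  have "a * n\<^sup>2 = (\<Prod>p\<in>S. p ^ (lo (f p) + (hi (f p) - lo (f p)) * 2))"
    unfolding a_def n_def prod_power_distrib power_mult[symmetric] prod.distrib[symmetric] power_add ..
  also have "\<dots> = (\<Prod>p\<in>S. p ^ f p)"
  proof (intro prod.cong refl)
    fix p
    have "lo (f p) + (hi (f p) - lo (f p)) * 2 = f p"
      using lh[of "f p"] by linarith
    then show "p ^ (lo (f p) + (hi (f p) - lo (f p)) * 2) = p ^ f p" by simp
  qed
  also have "\<dots> = m"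
    unfolding S_def f_def using prime_factorization_nat[OF assms(1)] by simp
  finally have m: "a * n\<^sup>2 = m" .
  obtain p where p: "prime p" "\<not> A3star (f p)"
    using assms G3star_iff_multiplicity unfolding f_def by blast
  then have "f p \<noteq> 0"
    by (metis A3star_0)
  then have "p \<in> S"
    using p(1) by (simp add: S_def f_def prime_factors_multiplicity)
  moreover have "lo (f p) \<noteq> hi (f p)"
    using lh[of "f p"] p(2) by auto
  ultimately have "multiplicity p n > 0"
    using lh[of "f p"] S p(1) unfolding n_def by (simp add: multiplicity_prod_prime_powers)
  moreover have "n > 0"
    using S unfolding n_def by (simp add: prime_gt_0_nat prod_pos)
  ultimately have "n \<ge> 2"
    by (cases "n = 1") auto
  moreover have "G3star a"
    unfolding a_def using S lh by (simp add: G3star_prod_prime_powers)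
  moreover have "G3star (a * n)"
    unfolding an using S lh by (simp add: G3star_prod_prime_powers)
  ultimately show thesis
    using m that by blast
qed

lemma G3star_iff_no_geometric_progression:
  "m > 0 \<Longrightarrow> G3star m \<longleftrightarrow> \<not> (\<exists>a n. 2 \<le> n \<and> a * n\<^sup>2 = m \<and> G3star a \<and> G3star (a * n))"
  using G3star_no_geometric_progression G3star_greedy by metis

definition exponent_gcd :: "nat \<Rightarrow> nat" where
  "exponent_gcd k = Gcd ((\<lambda>p. multiplicity p k) ` prime_factors k)"

lemma exponent_gcd_power: "x > 0 \<Longrightarrow> exponent_gcd (x ^ j) = j * exponent_gcd x"
proof (cases "j = 0")
  case False
  assume "x > 0"
  then have "prime_factors (x ^ j) = prime_factors x"
    using False by (auto simp: prime_factors_multiplicity prime_elem_multiplicity_power_distrib)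
  moreover have "(\<lambda>p. multiplicity p (x ^ j)) ` prime_factors x =
      (*) j ` (\<lambda>p. multiplicity p x) ` prime_factors x"
    unfolding image_image using \<open>x > 0\<close>
    by (intro image_cong refl)
      (simp add: prime_elem_multiplicity_power_distrib in_prime_factors_imp_prime)
  ultimately show ?thesis
    unfolding exponent_gcd_def by (simp add: Gcd_mult)
qed (simp add: exponent_gcd_def)

lemma exponent_gcd_dvd_multiplicity: "prime p \<Longrightarrow> exponent_gcd k dvd multiplicity p k"
  unfolding exponent_gcd_def
  by (cases "p \<in> prime_factors k") (simp_all add: Gcd_dvd prime_factors_multiplicity)

lemma exponent_gcd_pos:
  assumes "k \<ge> 2"
  shows "exponent_gcd k > 0"
proof -
  obtain p where p: "prime p" "p dvd k"
    using assms prime_factor_nat[of k] by auto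
  then have "multiplicity p k \<noteq> 0"
    using assms by (simp add: prime_multiplicity_gt_zero_iff)
  moreover have "exponent_gcd k dvd multiplicity p k"
    using p(1) by (rule exponent_gcd_dvd_multiplicity)
  ultimately show ?thesis
    by (metis dvd_0_left neq0_conv)
qed

lemma exponent_gcd_root:
  assumes "k \<ge> 2" "e > 0" "exponent_gcd k = e * a"
  obtains x where "x \<ge> 2" "x ^ e = k" "exponent_gcd x = a"
proof -
  have "\<forall>p. prime p \<longrightarrow> e dvd multiplicity p k"
    using assms(3) exponent_gcd_dvd_multiplicity by (metis dvd_mult_left)
  then obtain x where x: "x ^ e = k"
    using is_nth_power_conv_multiplicity_nat[OF assms(2)] unfolding is_nth_power_def by metis
  then have "x \<ge> 2"
    using assms(1,2) by (cases "x = 0 \<or> x = 1") (auto simp: zero_power)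
  moreover have "exponent_gcd x = a"
    using exponent_gcd_power[of x e] assms(2,3) x \<open>x \<ge> 2\<close> by simp
  ultimately show thesis
    using x that by blast
qed

lemma exponential_progression_bounds:
  fixes x n :: nat
  assumes "2 \<le> x" "2 \<le> n"
  shows "x < x ^ n" "x ^ n < x ^ n\<^sup>2" "n < x ^ n\<^sup>2"
proof -
  show "x < x ^ n"
    using power_strict_increasing[of 1 n x] assms by simp
  have "n < n\<^sup>2"
    using assms(2) by (simp add: power2_eq_square)
  then show "x ^ n < x ^ n\<^sup>2"
    using assms(1) by (intro power_strict_increasing) auto
  have "n < 2 ^ n"
    by (rule less_exp)
  also have "\<dots> \<le> x ^ n"
    using assms(1) by (rule power_mono) simp
  finally show "n < x ^ n\<^sup>2"
    using \<open>x ^ n < x ^ n\<^sup>2\<close> by linarith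
qed

lemma E3star_iff_no_exponential_progression:
  assumes "k \<ge> 2"
  shows "E3star k \<longleftrightarrow>
    \<not> (\<exists>x n. 2 \<le> x \<and> 2 \<le> n \<and> k = x ^ n\<^sup>2 \<and> E3star x \<and> E3star (x ^ n))"
proof -
  have "(\<exists>x\<in>{2..<k}. \<exists>n\<in>{2..<k}. k = x ^ n\<^sup>2 \<and> E3star x \<and>
          (if x ^ n < k then E3star (x ^ n) else False)) \<longleftrightarrow>
        (\<exists>x n. 2 \<le> x \<and> 2 \<le> n \<and> k = x ^ n\<^sup>2 \<and> E3star x \<and> E3star (x ^ n))"
    (is "?bounded \<longleftrightarrow> ?unbounded")
  proof
    assume ?bounded
    then show ?unbounded
      by (auto split: if_splits)
  next
    assume ?unbounded
    then obtain x n where xn: "2 \<le> x" "2 \<le> n" "k = x ^ n\<^sup>2" "E3star x" "E3star (x ^ n)"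
      by blast
    note bounds = exponential_progression_bounds[OF this(1,2)]
    have "x \<in> {2..<k}" "n \<in> {2..<k}" "x ^ n < k"
      using xn bounds less_trans[of x "x ^ n" k] by auto
    moreover have "k = x ^ n\<^sup>2 \<and> E3star x \<and> (if x ^ n < k then E3star (x ^ n) else False)"
      using xn \<open>x ^ n < k\<close> by simp
    ultimately show ?bounded
      by blast
  qed
  then show ?thesis
    using assms by (subst E3star.simps) simp
qed

lemma exponential_progression_iff_exponent_gcd_progression:
  fixes Q P :: "nat \<Rightarrow> bool"
  assumes "k \<ge> 2" and QP: "\<And>y. y < k \<Longrightarrow> 2 \<le> y \<Longrightarrow> Q y \<longleftrightarrow> P (exponent_gcd y)"
  shows "(\<exists>x n. 2 \<le> x \<and> 2 \<le> n \<and> k = x ^ n\<^sup>2 \<and> Q x \<and> Q (x ^ n)) \<longleftrightarrow>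
    (\<exists>a n. 2 \<le> n \<and> a * n\<^sup>2 = exponent_gcd k \<and> P a \<and> P (a * n))"
proof
  assume "\<exists>x n. 2 \<le> x \<and> 2 \<le> n \<and> k = x ^ n\<^sup>2 \<and> Q x \<and> Q (x ^ n)"
  then obtain x n where x: "2 \<le> x" and n: "2 \<le> n" and k: "k = x ^ n\<^sup>2" and Q: "Q x" "Q (x ^ n)"
    by blast
  note bounds = exponential_progression_bounds[OF x n]
  have "exponent_gcd (x ^ n) = exponent_gcd x * n" "exponent_gcd k = exponent_gcd x * n\<^sup>2"
    using exponent_gcd_power[of x] x k by simp_all
  then show "\<exists>a n. 2 \<le> n \<and> a * n\<^sup>2 = exponent_gcd k \<and> P a \<and> P (a * n)"
    using QP[of x] QP[of "x ^ n"] Q bounds x n k by auto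
next
  assume "\<exists>a n. 2 \<le> n \<and> a * n\<^sup>2 = exponent_gcd k \<and> P a \<and> P (a * n)"
  then obtain a n where n: "2 \<le> n" and "a * n\<^sup>2 = exponent_gcd k" and P: "P a" "P (a * n)"
    by blast
  then have "exponent_gcd k = n\<^sup>2 * a"
    by (simp add: mult.commute)
  moreover have "n\<^sup>2 > 0"
    using n by simp
  ultimately obtain x where x: "x \<ge> 2" "x ^ n\<^sup>2 = k" "exponent_gcd x = a"
    using exponent_gcd_root[OF assms(1)] by blast
  note bounds = exponential_progression_bounds[OF x(1) n]
  have "exponent_gcd (x ^ n) = a * n"
    using exponent_gcd_power[of x n] x by simp
  then show "\<exists>x n. 2 \<le> x \<and> 2 \<le> n \<and> k = x ^ n\<^sup>2 \<and> Q x \<and> Q (x ^ n)"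
    using QP[of x] QP[of "x ^ n"] P bounds x n by auto
qed

theorem mainTheorem3:
  fixes k :: nat
  assumes "k \<ge> 2"
  shows "E3star k \<longleftrightarrow> G3star (Gcd ((\<lambda>p. multiplicity p k) ` prime_factors k))"
  unfolding exponent_gcd_def[symmetric]
  using assms
proof (induction k rule: less_induct)
  case (less k)
  have "E3star k \<longleftrightarrow>
      \<not> (\<exists>x n. 2 \<le> x \<and> 2 \<le> n \<and> k = x ^ n\<^sup>2 \<and> E3star x \<and> E3star (x ^ n))"
    using less.prems by (rule E3star_iff_no_exponential_progression)
  also have "\<dots> \<longleftrightarrow>
      \<not> (\<exists>a n. 2 \<le> n \<and> a * n\<^sup>2 = exponent_gcd k \<and> G3star a \<and> G3star (a * n))"
    using exponential_progression_iff_exponent_gcd_progression[of k E3star G3star,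
        OF less.prems less.IH]
    by simp
  also have "\<dots> \<longleftrightarrow> G3star (exponent_gcd k)"
    using G3star_iff_no_geometric_progression exponent_gcd_pos[OF less.prems] by simp
  finally show ?case .
qed

end
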